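(* Let $d\ge1$ and let $\{\alpha_k\}$ and $\{j_k\}$ be as in the statement below. Let $K\in\mathbb R$ and $k\in\mathbb N$. (1) For any measurable $A\subset\mathcal C[K,K+d]$, writing $a=\mathcal B^{[K,K+d]}(A)$, $$\mathbb P\big(\mathcal L^{[K,K+d]}(k,\cdot)\in A\big)\le a\cdot 49\,e^{189\alpha_k^{-5}}\exp\Big\{\alpha_k^{-5/6}\Big(\log\big(a^{-1}(4j_k\vee1)\big)\Big)^{5/6}\Big\}.$$ (2) For $s>(\tfrac12\log2)^{1/2}\vee(\tfrac12\log(4j_k\vee1))^{1/2}$, $$\mathbb P\Big(\sup_{x\in[K,K+d]}\big|\mathcal L^{[K,K+d]}(k,x)\big|\ge s\,d^{1/2}\Big)\le 98\,e^{189\alpha_k^{-5}}\exp\Big\{-2s^2\big(1-2^{2/3}\alpha_k^{-5/6}s^{-1/3}\big)\Big\}.$$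
   Context: The Airy line ensemble $\mathcal A:\mathbb N\times\mathbb R\to\mathbb R$ (under probability $\mathbb P$) is the ordered collection of continuous curves whose finite-dimensional point processes $\{(s,\mathcal A(j,s)):j\in\mathbb N,s\in I\}$, $I$ finite, are determinantal with the extended Airy$_2$ kernel; $\mathcal L(i,x)=2^{-1/2}(\mathcal A(i,x)-x^2)$. For $d\ge1$, $K\in\mathbb R$: $\mathcal C[K,K+d]$ is the space of continuous functions on $[K,K+d]$ vanishing at both endpoints; $\mathcal L^{[K,K+d]}(k,x)=\mathcal L(k,x)-(K+d-x)d^{-1}\mathcal L(k,K)-(x-K)d^{-1}\mathcal L(k,K+d)$; $\mathcal B^{[K,K+d]}$ is the law of Brownian bridge (diffusion parameter one) on $[K,K+d]$ vanishing at both endpoints; $f_k$ is the Radon–Nikodym derivative of the law of $\mathcal L^{[K,K+d]}(k,\cdot)$ with respect to $\mathcal B^{[K,K+d]}$. The sequence $\alpha_k\in(0,1]$ (depending on $d$ only, with $\inf\alpha_k^{1/k}>0$) is one for which $j_k=\int\exp\{\alpha_k(\log f_k)^{6/5}\}\,d\mathcal B^{[K,K+d]}$ is finite and independent of $K$ for every $k$ (such a sequence exists). *)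

theory Defs
  imports "HOL-Probability.Probability"
begin

definition airy_Ai :: "real \<Rightarrow> real" where
  "airy_Ai x = Lim at_top (\<lambda>R. (1 / pi) * integral {0..R} (\<lambda>t. cos (t ^ 3 / 3 + x * t)))"

definition ext_airy_kernel :: "real \<Rightarrow> real \<Rightarrow> real \<Rightarrow> real \<Rightarrow> real" where
  "ext_airy_kernel s x t y =
     (if s \<ge> t
      then (LINT l:{0..}|lborel. exp (- l * (s - t)) * airy_Ai (x + l) * airy_Ai (y + l))
      else - (LINT l:{..0}|lborel. exp (- l * (s - t)) * airy_Ai (x + l) * airy_Ai (y + l)))"

definition det_n :: "nat \<Rightarrow> (nat \<Rightarrow> nat \<Rightarrow> real) \<Rightarrow> real" where
  "det_n n M = (\<Sum>\<sigma>\<in>{\<sigma>. \<sigma> permutes {..<n}}. of_int (sign \<sigma>) * (\<Prod>i<n. M i (\<sigma> i)))"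

text \<open>Curves are indexed by j \<ge> 1 (the value at index 0 is irrelevant).
  The determinantal condition: for every finite set I of times, the point process
  {(s, A(j,s)) : j \<ge> 1, s \<in> I} has n-point correlation functions
  det[K(s_a,x_a; s_b,x_b)] with respect to (counting measure on I) x Lebesgue,
  expressed via the defining identity for factorial moment measures.\<close>
definition airy_line_ensemble :: "'w measure \<Rightarrow> ('w \<Rightarrow> nat \<Rightarrow> real \<Rightarrow> real) \<Rightarrow> bool" where
  "airy_line_ensemble M A \<longleftrightarrow>
     prob_space M \<and>
     (\<forall>j x. (\<lambda>\<omega>. A \<omega> j x) \<in> borel_measurable M) \<and>
     (\<forall>\<omega>\<in>space M. \<forall>j\<ge>1. continuous_on UNIV (A \<omega> j) \<and> (\<forall>x. A \<omega> (Suc j) x \<le> A \<omega> j x)) \<and>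
     (\<forall>(I::real set) (n::nat) (\<phi>::(nat \<Rightarrow> real) \<Rightarrow> (nat \<Rightarrow> real) \<Rightarrow> ennreal).
        finite I \<longrightarrow> (\<forall>s. \<phi> s \<in> borel_measurable (PiM {..<n} (\<lambda>_. lborel))) \<longrightarrow>
        (\<integral>\<^sup>+ \<omega>. (\<integral>\<^sup>+ p. \<phi> (\<lambda>i\<in>{..<n}. fst (p i)) (\<lambda>i\<in>{..<n}. A \<omega> (snd (p i)) (fst (p i)))
              \<partial>count_space {p \<in> PiE {..<n} (\<lambda>_. I \<times> {1..}). inj_on p {..<n}}) \<partial>M)
        = (\<Sum>s\<in>PiE {..<n} (\<lambda>_. I).
             \<integral>\<^sup>+ x. \<phi> s x * ennreal (det_n n (\<lambda>a b. ext_airy_kernel (s a) (x a) (s b) (x b)))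
               \<partial>PiM {..<n} (\<lambda>_. lborel)))"

definition airy_L :: "('w \<Rightarrow> nat \<Rightarrow> real \<Rightarrow> real) \<Rightarrow> 'w \<Rightarrow> nat \<Rightarrow> real \<Rightarrow> real" where
  "airy_L A \<omega> i x = (A \<omega> i x - x ^ 2) / sqrt 2"

definition bridge_L :: "('w \<Rightarrow> nat \<Rightarrow> real \<Rightarrow> real) \<Rightarrow> real \<Rightarrow> real \<Rightarrow> 'w \<Rightarrow> nat \<Rightarrow> real \<Rightarrow> real" where
  "bridge_L A K d \<omega> k x = airy_L A \<omega> k x - (K + d - x) / d * airy_L A \<omega> k K
                                         - (x - K) / d * airy_L A \<omega> k (K + d)"

definition C0 :: "real \<Rightarrow> real \<Rightarrow> (real \<Rightarrow> real) set" where
  "C0 K d = {g \<in> extensional {K..K+d}. continuous_on {K..K+d} g \<and> g K = 0 \<and> g (K + d) = 0}"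

text \<open>Measurable structure: trace of the product (cylinder) sigma-algebra, which is
  the Borel sigma-algebra of the uniform topology on C[K,K+d].\<close>
definition bridge_space :: "real \<Rightarrow> real \<Rightarrow> (real \<Rightarrow> real) measure" where
  "bridge_space K d = restrict_space (PiM {K..K+d} (\<lambda>_. borel)) (C0 K d)"

definition heat_kernel :: "real \<Rightarrow> real \<Rightarrow> real" where
  "heat_kernel t y = exp (- (y ^ 2) / (2 * t)) / sqrt (2 * pi * t)"

text \<open>Joint density of Brownian bridge (diffusion parameter one) on [K,K+d], vanishing
  at both endpoints, at increasing times ts 0 < ... < ts (m-1) in (K,K+d).\<close>
definition bb_fdd_density :: "real \<Rightarrow> real \<Rightarrow> nat \<Rightarrow> (nat \<Rightarrow> real) \<Rightarrow> (nat \<Rightarrow> real) \<Rightarrow> real" where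
  "bb_fdd_density K d m ts x =
     (let tt = (\<lambda>i. if i = 0 then K else if i \<le> m then ts (i - 1) else K + d);
          xx = (\<lambda>i. if i = 0 then 0 else if i \<le> m then x (i - 1) else 0)
      in (\<Prod>i\<le>m. heat_kernel (tt (Suc i) - tt i) (xx (Suc i) - xx i)) / heat_kernel d 0)"

text \<open>mu is the law B^{[K,K+d]} of Brownian bridge: a probability measure on C[K,K+d]
  with the Brownian bridge finite-dimensional distributions (which determine it).\<close>
definition is_brownian_bridge :: "real \<Rightarrow> real \<Rightarrow> (real \<Rightarrow> real) measure \<Rightarrow> bool" where
  "is_brownian_bridge K d \<mu> \<longleftrightarrow>
     prob_space \<mu> \<and> sets \<mu> = sets (bridge_space K d) \<and>
     (\<forall>m (ts :: nat \<Rightarrow> real).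
        (\<forall>i<m. K < ts i \<and> ts i < K + d) \<longrightarrow> (\<forall>i. Suc i < m \<longrightarrow> ts i < ts (Suc i)) \<longrightarrow>
        (\<forall>S \<in> sets (PiM {..<m} (\<lambda>_. borel)).
           emeasure \<mu> {g \<in> space \<mu>. (\<lambda>i\<in>{..<m}. g (ts i)) \<in> S}
           = (\<integral>\<^sup>+ x\<in>S. ennreal (bb_fdd_density K d m ts x) \<partial>PiM {..<m} (\<lambda>_. lborel))))"

definition bridge_law :: "'w measure \<Rightarrow> ('w \<Rightarrow> nat \<Rightarrow> real \<Rightarrow> real) \<Rightarrow> real \<Rightarrow> real \<Rightarrow> nat \<Rightarrow> (real \<Rightarrow> real) measure" where
  "bridge_law M A K d k = distr M (bridge_space K d) (\<lambda>\<omega>. restrict (bridge_L A K d \<omega> k) {K..K+d})"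

definition rn_density :: "'w measure \<Rightarrow> ('w \<Rightarrow> nat \<Rightarrow> real \<Rightarrow> real) \<Rightarrow> (real \<Rightarrow> real) measure \<Rightarrow> real \<Rightarrow> real \<Rightarrow> nat \<Rightarrow> (real \<Rightarrow> real) \<Rightarrow> real" where
  "rn_density M A B K d k g = enn2real (RN_deriv B (bridge_law M A K d k) g)"

end

theory Submission
  imports Defs
begin

text \<open>Part (1) is a change of measure controlled by the exponential moment \<open>j_k\<close> of the density
  \<open>f\<close>. For \<open>u \<ge> T \<ge> 0\<close> one has \<open>u - \<alpha> u^(6/5) \<le> T - \<alpha> T^(6/5) + \<alpha>^(-5)\<close>, hence pointwise
  \<open>f \<le> e^T + exp(T - \<alpha> T^(6/5) + \<alpha>^(-5)) exp(\<alpha> (log f)_+^(6/5))\<close>. Integrating over \<open>A\<close> gives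
  \<open>P(A) \<le> e^T a + exp(T - \<alpha> T^(6/5) + \<alpha>^(-5)) j_k\<close>, and the choice \<open>\<alpha> T^(6/5) = log(max (4 j_k) 1 / a)\<close>
  balances the two terms.

  Part (2) applies (1) to the event \<open>sup |B| \<ge> s d^(1/2)\<close>, whose Brownian-bridge probability is
  at most \<open>2 exp(-2 s^2)\<close>. This reflection bound is proved first on finite grids, by induction
  over the Gaussian transition densities: once the level \<open>c\<close> has been reached, the density
  started from \<open>0\<close> may be replaced by the one started from \<open>2 c\<close>. Continuity then passes from
  dyadic grids to the supremum.\<close>

section \<open>The heat kernel\<close>

lemma heat_kernel_eq_normal_density: "t > 0 \<Longrightarrow> heat_kernel t y = normal_density 0 (sqrt t) y"
  by (simp add: heat_kernel_def normal_density_def divide_simps)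

lemma heat_kernel_nonneg: "0 \<le> t \<Longrightarrow> 0 \<le> heat_kernel t y"
  by (simp add: heat_kernel_def)

lemma borel_measurable_heat_kernel[measurable]: "heat_kernel t \<in> borel_measurable borel"
  unfolding heat_kernel_def by measurable

lemma heat_kernel_mono:
  assumes "t > 0" "y\<^sup>2 \<le> y'\<^sup>2"
  shows "heat_kernel t y' \<le> heat_kernel t y"
  using assms by (simp add: heat_kernel_def divide_right_mono frac_le)

lemma heat_kernel_minus[simp]: "heat_kernel t (- y) = heat_kernel t y"
  by (simp add: heat_kernel_def)

lemma heat_kernel_double: "t > 0 \<Longrightarrow> heat_kernel t (2 * c) = heat_kernel t 0 * exp (- 2 * c\<^sup>2 / t)"
  by (simp add: heat_kernel_def power_mult_distrib)

lemma heat_kernel_chapman_kolmogorov: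
  assumes "a > 0" "b > 0"
  shows "(\<integral>\<^sup>+w. ennreal (heat_kernel a (z - w) * heat_kernel b (w - p)) \<partial>lborel)
    = ennreal (heat_kernel (a + b) (z - p))"
proof -
  have "(\<integral>\<^sup>+w. ennreal (heat_kernel a (z - w) * heat_kernel b (w - p)) \<partial>lborel)
      = (\<integral>\<^sup>+y. ennreal (heat_kernel a (z - (p + 1 * y)) * heat_kernel b ((p + 1 * y) - p)) \<partial>lborel)"
    by (subst nn_integral_real_affine[of _ 1 p]) auto
  also have "\<dots> = (\<integral>\<^sup>+y. ennreal (normal_density 0 (sqrt a) ((z - p) - y) * normal_density 0 (sqrt b) y) \<partial>lborel)"
    using assms by (simp add: heat_kernel_eq_normal_density algebra_simps)
  also have "\<dots> = ennreal (normal_density 0 (sqrt ((sqrt a)\<^sup>2 + (sqrt b)\<^sup>2)) (z - p))"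
    using conv_normal_density_zero_mean[of "sqrt a" "sqrt b"] assms by (auto dest: fun_cong[where x="z - p"])
  also have "\<dots> = ennreal (heat_kernel (a + b) (z - p))"
    using assms by (simp add: heat_kernel_eq_normal_density)
  finally show ?thesis .
qed

section \<open>Brownian bridge at finitely many times\<close>

text \<open>Density of Brownian motion started at \<open>0\<close> at time \<open>K\<close> passing through \<open>x i\<close> at the times
  \<open>ts i\<close> (\<open>i < m\<close>) and through \<open>z\<close> at time \<open>r\<close>; the bridge densities \<open>bb_fdd_density\<close>
  are its values at \<open>(r, z) = (K + d, 0)\<close>, normalised by \<open>heat_kernel d 0\<close>.\<close>
definition bm_chain_density :: "real \<Rightarrow> nat \<Rightarrow> (nat \<Rightarrow> real) \<Rightarrow> real \<Rightarrow> real \<Rightarrow> (nat \<Rightarrow> real) \<Rightarrow> real" where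
  "bm_chain_density K m ts r z x =
     (let tt = (\<lambda>i. if i = 0 then K else if i \<le> m then ts (i - 1) else r);
          xx = (\<lambda>i. if i = 0 then 0 else if i \<le> m then x (i - 1) else z)
      in (\<Prod>i\<le>m. heat_kernel (tt (Suc i) - tt i) (xx (Suc i) - xx i)))"

lemma bb_fdd_density_eq_bm_chain_density:
  "bb_fdd_density K d m ts x = bm_chain_density K m ts (K + d) 0 x / heat_kernel d 0"
  by (simp add: bb_fdd_density_def bm_chain_density_def Let_def)

lemma bm_chain_density_0: "bm_chain_density K 0 ts r z x = heat_kernel (r - K) z"
  by (simp add: bm_chain_density_def)

lemma bm_chain_density_Suc:
  "bm_chain_density K (Suc m) ts r z (x(m := w))
     = bm_chain_density K m ts (ts m) w x * heat_kernel (r - ts m) (z - w)"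
  unfolding bm_chain_density_def Let_def prod.atMost_Suc[of _ m]
  by (intro arg_cong2[where f = "(*)"] prod.cong) (auto simp: not_less_eq_eq dest: le_antisym)

lemma borel_measurable_PiM_component[measurable]:
  "(\<lambda>x. x j) \<in> borel_measurable (PiM I (\<lambda>_. lborel))"
proof (cases "j \<in> I")
  case True
  then show ?thesis using measurable_component_singleton[OF True, of "\<lambda>_. lborel"] by simp
next
  case False
  have "(\<lambda>x. undefined) \<in> borel_measurable (PiM I (\<lambda>_. lborel))" by simp
  then show ?thesis
    by (rule measurable_cong[THEN iffD1, rotated]) (use False in \<open>auto simp: space_PiM PiE_def extensional_def\<close>)
qed

lemma borel_measurable_bm_chain_density[measurable]:
  "bm_chain_density K m ts r z \<in> borel_measurable (PiM I (\<lambda>_. lborel))"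
  unfolding bm_chain_density_def Let_def
  by (intro borel_measurable_prod) (auto intro!: measurable_compose[OF _ borel_measurable_heat_kernel])

lemma nn_integral_bm_chain_density_Suc:
  assumes "ts m \<le> r" and P: "P \<in> borel_measurable (PiM {..<Suc m} (\<lambda>_. lborel))"
    and Q: "\<And>w. Q w \<in> borel_measurable (PiM {..<m} (\<lambda>_. lborel))"
    and PQ: "\<And>x w. P (x(m := w)) = Q w x"
  shows "(\<integral>\<^sup>+x. ennreal (bm_chain_density K (Suc m) ts r z x) * P x \<partial>PiM {..<Suc m} (\<lambda>_. lborel))
    = (\<integral>\<^sup>+w. ennreal (heat_kernel (r - ts m) (z - w)) *
          (\<integral>\<^sup>+x. ennreal (bm_chain_density K m ts (ts m) w x) * Q w x \<partial>PiM {..<m} (\<lambda>_. lborel)) \<partial>lborel)"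
    (is "_ = ?rhs")
proof -
  interpret product_sigma_finite "\<lambda>_. lborel" by standard
  have [measurable]: "P \<in> borel_measurable (PiM (insert m {..<m}) (\<lambda>_. lborel))"
    using P by (simp add: lessThan_Suc)
  have "(\<integral>\<^sup>+x. ennreal (bm_chain_density K (Suc m) ts r z x) * P x \<partial>PiM {..<Suc m} (\<lambda>_. lborel))
      = (\<integral>\<^sup>+w. \<integral>\<^sup>+x. ennreal (bm_chain_density K (Suc m) ts r z (x(m := w))) * P (x(m := w))
           \<partial>PiM {..<m} (\<lambda>_. lborel) \<partial>lborel)"
    unfolding lessThan_Suc by (subst product_nn_integral_insert_rev) auto
  also have "\<dots> = ?rhs"
    using assms(1) Q by (subst nn_integral_cmult[symmetric])
      (auto simp: bm_chain_density_Suc PQ ennreal_mult' heat_kernel_nonneg mult_ac intro!: nn_integral_cong)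
  finally show ?thesis .
qed

lemma nn_integral_bm_chain_density:
  assumes "\<forall>i<m. K < ts i \<and> ts i < r" "\<forall>i. Suc i < m \<longrightarrow> ts i < ts (Suc i)" "K < r"
  shows "(\<integral>\<^sup>+x. ennreal (bm_chain_density K m ts r z x) \<partial>PiM {..<m} (\<lambda>_. lborel))
    = ennreal (heat_kernel (r - K) z)"
  using assms
proof (induction m arbitrary: r z)
  case 0
  then show ?case by (simp add: bm_chain_density_0 PiM_empty)
next
  case (Suc m)
  have tm: "K < ts m" "ts m < r" using Suc.prems by auto
  have "\<forall>i<m. ts i < ts m"
    using Suc.prems(2) by (auto intro!: lift_Suc_mono_less_ivl[of "{..<m}" ts _ m])
  then have IH: "(\<integral>\<^sup>+x. ennreal (bm_chain_density K m ts (ts m) w x) \<partial>PiM {..<m} (\<lambda>_. lborel))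
      = ennreal (heat_kernel (ts m - K) (w - 0))" for w
    using Suc.IH[of "ts m" w] Suc.prems tm by auto
  have "(\<integral>\<^sup>+x. ennreal (bm_chain_density K (Suc m) ts r z x) \<partial>PiM {..<Suc m} (\<lambda>_. lborel))
      = (\<integral>\<^sup>+x. ennreal (bm_chain_density K (Suc m) ts r z x) * 1 \<partial>PiM {..<Suc m} (\<lambda>_. lborel))"
    by simp
  also have "\<dots> = (\<integral>\<^sup>+w. ennreal (heat_kernel (r - ts m) (z - w)) *
                     (\<integral>\<^sup>+x. ennreal (bm_chain_density K m ts (ts m) w x) * 1 \<partial>PiM {..<m} (\<lambda>_. lborel)) \<partial>lborel)"
    by (rule nn_integral_bm_chain_density_Suc) (use tm in auto)
  also have "\<dots> = (\<integral>\<^sup>+w. ennreal (heat_kernel (r - ts m) (z - w)) * ennreal (heat_kernel (ts m - K) (w - 0)) \<partial>lborel)"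
    by (simp add: IH)
  also have "\<dots> = ennreal (heat_kernel (r - K) (z - 0))"
    using heat_kernel_chapman_kolmogorov[of "r - ts m" "ts m - K" z 0] tm
    by (simp add: ennreal_mult' heat_kernel_nonneg)
  finally show ?case by simp
qed

text \<open>The encoding \<open>c\<^sup>2 \<le> c * x i\<close> means \<open>x i \<ge> c\<close> for \<open>c > 0\<close> and \<open>x i \<le> c\<close> for \<open>c < 0\<close>.\<close>
definition level_reached :: "real \<Rightarrow> nat \<Rightarrow> (nat \<Rightarrow> real) set" where
  "level_reached c m = {x. \<exists>i<m. c\<^sup>2 \<le> c * x i}"

lemma indicator_level_reached_Suc:
  "indicator (level_reached c (Suc m)) (x(m := w))
     = (if c\<^sup>2 \<le> c * w then 1 else (indicator (level_reached c m) x :: ennreal))"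
  by (auto simp: level_reached_def indicator_def less_Suc_eq)

lemma borel_measurable_indicator_level_reached[measurable]:
  "(indicator (level_reached c m) :: _ \<Rightarrow> ennreal) \<in> borel_measurable (PiM I (\<lambda>_. lborel))"
proof -
  have "level_reached c m \<inter> space (PiM I (\<lambda>_. lborel))
      = {x \<in> space (PiM I (\<lambda>_. lborel)). \<exists>i<m. c\<^sup>2 \<le> c * x i}"
    by (auto simp: level_reached_def)
  also have "\<dots> \<in> sets (PiM I (\<lambda>_. lborel))" by measurable
  finally show ?thesis by (simp add: borel_measurable_indicator_iff)
qed

text \<open>Discrete reflection principle: once the chain has reached \<open>c\<close> at time \<open>ts m\<close>, the
  heat kernel from \<open>0\<close> is dominated by the one from the mirror point \<open>2 c\<close>.\<close>
lemma nn_integral_bm_chain_density_level_reached: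
  assumes "\<forall>i<m. K < ts i \<and> ts i < r" "\<forall>i. Suc i < m \<longrightarrow> ts i < ts (Suc i)" "K < r"
  shows "(\<integral>\<^sup>+x. ennreal (bm_chain_density K m ts r z x) * indicator (level_reached c m) x
             \<partial>PiM {..<m} (\<lambda>_. lborel))
    \<le> ennreal (heat_kernel (r - K) (z - 2 * c))"
  using assms
proof (induction m arbitrary: r z)
  case 0
  then show ?case by (simp add: level_reached_def)
next
  case (Suc m)
  have tm: "K < ts m" "ts m < r" using Suc.prems by auto
  have mono: "\<forall>i<m. ts i < ts m"
    using Suc.prems(2) by (auto intro!: lift_Suc_mono_less_ivl[of "{..<m}" ts _ m])
  have step: "(\<integral>\<^sup>+x. ennreal (bm_chain_density K m ts (ts m) w x) *
                 (if c\<^sup>2 \<le> c * w then 1 else indicator (level_reached c m) x) \<partial>PiM {..<m} (\<lambda>_. lborel))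
      \<le> ennreal (heat_kernel (ts m - K) (w - 2 * c))" for w
  proof (cases "c\<^sup>2 \<le> c * w")
    case True
    then have "(w - 2 * c)\<^sup>2 \<le> w\<^sup>2" by (simp add: power2_eq_square algebra_simps)
    then have "heat_kernel (ts m - K) w \<le> heat_kernel (ts m - K) (w - 2 * c)"
      using tm by (intro heat_kernel_mono) auto
    then show ?thesis
      using True nn_integral_bm_chain_density[of m K ts "ts m" w] Suc.prems mono tm
      by (simp add: ennreal_leI)
  next
    case False
    then show ?thesis using Suc.IH[of "ts m" w] Suc.prems mono tm by simp
  qed
  have "(\<integral>\<^sup>+x. ennreal (bm_chain_density K (Suc m) ts r z x) * indicator (level_reached c (Suc m)) x
           \<partial>PiM {..<Suc m} (\<lambda>_. lborel))
      = (\<integral>\<^sup>+w. ennreal (heat_kernel (r - ts m) (z - w)) *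
          (\<integral>\<^sup>+x. ennreal (bm_chain_density K m ts (ts m) w x) *
             (if c\<^sup>2 \<le> c * w then 1 else indicator (level_reached c m) x) \<partial>PiM {..<m} (\<lambda>_. lborel)) \<partial>lborel)"
    by (rule nn_integral_bm_chain_density_Suc) (use tm in \<open>auto simp: indicator_level_reached_Suc\<close>)
  also have "\<dots> \<le> (\<integral>\<^sup>+w. ennreal (heat_kernel (r - ts m) (z - w)) *
                        ennreal (heat_kernel (ts m - K) (w - 2 * c)) \<partial>lborel)"
    using step by (intro nn_integral_mono mult_left_mono) auto
  also have "\<dots> = ennreal (heat_kernel (r - K) (z - 2 * c))"
    using heat_kernel_chapman_kolmogorov[of "r - ts m" "ts m - K" z "2 * c"] tm
    by (simp add: ennreal_mult' heat_kernel_nonneg)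
  finally show ?case .
qed

lemma abs_exceeds_subset_level_reached:
  assumes y: "y > 0"
  shows "{x. \<exists>i<m. y < \<bar>x i\<bar>} \<subseteq> level_reached y m \<union> level_reached (- y) m"
proof
  fix x assume "x \<in> {x. \<exists>i<m. y < \<bar>x i\<bar>}"
  then obtain i where "i < m" "y < \<bar>x i\<bar>" by auto
  moreover from this consider "y \<le> x i" | "y \<le> - x i" by linarith
  then have "y * y \<le> y * x i \<or> y * y \<le> y * - x i"
    by cases (use y in \<open>metis mult_left_mono less_imp_le\<close>)+
  ultimately show "x \<in> level_reached y m \<union> level_reached (- y) m"
    unfolding level_reached_def by (auto simp: power2_eq_square)
qed

lemma brownian_bridge_grid_tail:
  assumes BB: "is_brownian_bridge K d \<mu>" and d: "d > 0" and y: "y > 0"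
    and ts: "\<forall>i<m. K < ts i \<and> ts i < K + d" "\<forall>i. Suc i < m \<longrightarrow> ts i < ts (Suc i)"
  shows "emeasure \<mu> {g \<in> space \<mu>. \<exists>i<m. y < \<bar>g (ts i)\<bar>} \<le> ennreal (2 * exp (- 2 * y\<^sup>2 / d))"
proof -
  define S where "S = {x \<in> space (PiM {..<m} (\<lambda>_. borel)). \<exists>i<m. y < \<bar>x i\<bar>}"
  have S: "S \<in> sets (PiM {..<m} (\<lambda>_. borel))" unfolding S_def by measurable
  define c where "c = ennreal (1 / heat_kernel d 0)"
  define chain where "chain x = ennreal (bm_chain_density K m ts (K + d) 0 x)" for x
  have h0: "heat_kernel d 0 > 0" using d by (simp add: heat_kernel_def)
  have cover: "indicator S x \<le> (indicator (level_reached y m) x + indicator (level_reached (- y) m) x :: ennreal)"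
    for x
    using abs_exceeds_subset_level_reached[OF y, of m] by (auto simp: S_def indicator_def)
  have "{g \<in> space \<mu>. \<exists>i<m. y < \<bar>g (ts i)\<bar>} = {g \<in> space \<mu>. (\<lambda>i\<in>{..<m}. g (ts i)) \<in> S}"
    by (auto simp: S_def space_PiM)
  then have "emeasure \<mu> {g \<in> space \<mu>. \<exists>i<m. y < \<bar>g (ts i)\<bar>}
      = (\<integral>\<^sup>+ x\<in>S. ennreal (bb_fdd_density K d m ts x) \<partial>PiM {..<m} (\<lambda>_. lborel))"
    using BB ts S unfolding is_brownian_bridge_def by simp
  also have "\<dots> \<le> (\<integral>\<^sup>+ x. c * (chain x * indicator (level_reached y m) x)
                      + c * (chain x * indicator (level_reached (- y) m) x) \<partial>PiM {..<m} (\<lambda>_. lborel))"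
  proof (rule nn_integral_mono)
    fix x
    have "ennreal (bb_fdd_density K d m ts x) = c * chain x"
      using h0 by (simp add: c_def chain_def bb_fdd_density_eq_bm_chain_density ennreal_mult' divide_inverse mult.commute)
    then show "ennreal (bb_fdd_density K d m ts x) * indicator S x
        \<le> c * (chain x * indicator (level_reached y m) x) + c * (chain x * indicator (level_reached (- y) m) x)"
      using mult_left_mono[OF cover[of x], of "c * chain x"] by (simp add: distrib_left mult.assoc)
  qed
  also have "\<dots> = c * (\<integral>\<^sup>+ x. chain x * indicator (level_reached y m) x \<partial>PiM {..<m} (\<lambda>_. lborel))
                + c * (\<integral>\<^sup>+ x. chain x * indicator (level_reached (- y) m) x \<partial>PiM {..<m} (\<lambda>_. lborel))"
    by (simp add: chain_def nn_integral_add nn_integral_cmult)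
  also have "\<dots> \<le> c * ennreal (heat_kernel d (0 - 2 * y)) + c * ennreal (heat_kernel d (0 - 2 * - y))"
    using nn_integral_bm_chain_density_level_reached[of m K ts "K + d" 0 y]
      nn_integral_bm_chain_density_level_reached[of m K ts "K + d" 0 "- y"] ts d
    unfolding chain_def by (intro add_mono mult_left_mono) auto
  also have "\<dots> = ennreal (2 * exp (- 2 * y\<^sup>2 / d))"
    using h0 d heat_kernel_double[of d y]
    by (simp add: c_def ennreal_mult[symmetric] ennreal_plus[symmetric] del: ennreal_plus)
  finally show ?thesis .
qed

section \<open>Supremum of the Brownian bridge\<close>

lemma space_bridge_space: "space (bridge_space K d) = C0 K d"
  by (auto simp: bridge_space_def space_restrict_space space_PiM C0_def PiE_def)

lemma bdd_above_abs_C0: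
  assumes "g \<in> C0 K d"
  shows "bdd_above ((\<lambda>t. \<bar>g t\<bar>) ` {K..K+d})"
proof -
  have "continuous_on {K..K+d} g" using assms by (simp add: C0_def)
  then have "compact ((\<lambda>t. \<bar>g t\<bar>) ` {K..K+d})"
    by (intro compact_continuous_image continuous_on_rabs) auto
  then show ?thesis by (auto intro: bounded_imp_bdd_above compact_imp_bounded)
qed

definition dyadic_exceedance :: "real \<Rightarrow> real \<Rightarrow> nat \<Rightarrow> real \<Rightarrow> (real \<Rightarrow> real) set" where
  "dyadic_exceedance K d N y = {g \<in> C0 K d. \<exists>i < 2^N - 1. y < \<bar>g (K + d * (real i + 1) / 2^N)\<bar>}"

lemma dyadic_point_bounds:
  assumes "d > 0" "i < 2^N - 1"
  shows "K < K + d * (real i + 1) / 2^N" "K + d * (real i + 1) / 2^N < K + d"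
proof -
  have "Suc i < 2^N" using assms(2) by linarith
  then have "real (Suc i) < 2^N" by (metis of_nat_less_numeral_power_cancel_iff)
  then have "d * (real i + 1) < d * 2^N" using assms(1) by simp
  moreover have "0 < d * (real i + 1)" using assms(1) by simp
  ultimately show "K < K + d * (real i + 1) / 2^N" "K + d * (real i + 1) / 2^N < K + d"
    by (simp_all add: field_simps)
qed

lemma dyadic_exceedance_in_sets:
  assumes "d > 0"
  shows "dyadic_exceedance K d N y \<in> sets (bridge_space K d)"
proof -
  have [measurable]: "(\<lambda>g. g (K + d * (real i + 1) / 2^N)) \<in> borel_measurable (bridge_space K d)"
    if "i < 2^N - 1" for i
    unfolding bridge_space_def
    by (rule measurable_restrict_space1)
      (use dyadic_point_bounds[OF assms that, of K] in \<open>simp add: less_imp_le\<close>)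
  have "dyadic_exceedance K d N y
      = {g \<in> space (bridge_space K d). \<exists>i < 2^N - 1. y < \<bar>g (K + d * (real i + 1) / 2^N)\<bar>}"
    by (simp add: dyadic_exceedance_def space_bridge_space)
  also have "\<dots> \<in> sets (bridge_space K d)" by measurable
  finally show ?thesis .
qed

lemma emeasure_dyadic_exceedance_le:
  assumes BB: "is_brownian_bridge K d \<mu>" and d: "d > 0" and y: "y > 0"
  shows "emeasure \<mu> (dyadic_exceedance K d N y) \<le> ennreal (2 * exp (- 2 * y\<^sup>2 / d))"
proof -
  define ts where "ts i = K + d * (real i + 1) / 2^N" for i :: nat
  have "space \<mu> = C0 K d"
    using BB sets_eq_imp_space_eq[of \<mu> "bridge_space K d"]
    by (simp add: is_brownian_bridge_def space_bridge_space)
  then have "dyadic_exceedance K d N y = {g \<in> space \<mu>. \<exists>i<2^N - 1. y < \<bar>g (ts i)\<bar>}"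
    by (simp add: dyadic_exceedance_def ts_def)
  moreover have "\<forall>i<2^N - 1. K < ts i \<and> ts i < K + d"
    using dyadic_point_bounds[OF d] by (simp add: ts_def)
  moreover have "\<forall>i. Suc i < 2^N - 1 \<longrightarrow> ts i < ts (Suc i)"
    using d by (simp add: ts_def divide_strict_right_mono)
  ultimately show ?thesis using brownian_bridge_grid_tail[OF BB d y] by simp
qed

lemma incseq_dyadic_exceedance: "incseq (\<lambda>N. dyadic_exceedance K d N y)"
proof (rule incseq_SucI, rule subsetI)
  fix N g assume "g \<in> dyadic_exceedance K d N y"
  then obtain i where i: "i < 2^N - 1" "y < \<bar>g (K + d * (real i + 1) / 2^N)\<bar>" "g \<in> C0 K d"
    by (auto simp: dyadic_exceedance_def)
  have "K + d * (real (2 * i + 1) + 1) / 2^Suc N = K + d * (real i + 1) / 2^N"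
    by (simp add: field_simps)
  moreover have "2 * i + 1 < 2^Suc N - 1" using i(1) by simp
  ultimately show "g \<in> dyadic_exceedance K d (Suc N) y"
    using i unfolding dyadic_exceedance_def by (intro CollectI conjI exI[of _ "2 * i + 1"]) auto
qed

lemma exists_dyadic_exceedance:
  assumes g: "g \<in> C0 K d" and d: "d > 0" and y: "y > 0" and sup: "y < (SUP t\<in>{K..K+d}. \<bar>g t\<bar>)"
  shows "\<exists>N. g \<in> dyadic_exceedance K d N y"
proof -
  have cont: "continuous_on {K..K+d} g" and g0: "g K = 0" "g (K + d) = 0"
    using g by (auto simp: C0_def)
  obtain t where t: "t \<in> {K..K+d}" "y < \<bar>g t\<bar>"
    using sup less_cSUP_iff[OF _ bdd_above_abs_C0[OF g]] d by auto
  obtain \<delta> where \<delta>: "\<delta> > 0" "\<forall>u\<in>{K..K+d}. dist u t < \<delta> \<longrightarrow> dist (g u) (g t) < \<bar>g t\<bar> - y"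
    using cont t unfolding continuous_on_iff by (metis diff_gt_0_iff_gt)
  obtain N :: nat where N: "d / \<delta> < 2^N" using real_arch_pow[of 2 "d / \<delta>"] by auto
  text \<open>The dyadic point \<open>u\<close> of level \<open>N\<close> just left of \<open>t\<close> is within \<open>\<delta>\<close> of \<open>t\<close>.\<close>
  define i where "i = nat \<lfloor>(t - K) * 2^N / d\<rfloor>"
  define u where "u = K + d * real i / 2^N"
  have i: "real i \<le> (t - K) * 2^N / d" "(t - K) * 2^N / d < real i + 1"
    using t d by (auto simp: i_def)
  then have "d * real i / 2^N \<le> t - K" "t - K < d * real i / 2^N + d / 2^N"
    using d by (simp_all add: field_simps)
  moreover have "d / 2^N < \<delta>" using N \<delta> by (simp add: field_simps)
  ultimately have ut: "u \<le> t" "t - u < \<delta>" by (auto simp: u_def)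
  moreover have "K \<le> u" using d by (simp add: u_def)
  ultimately have "\<bar>g u - g t\<bar> < \<bar>g t\<bar> - y" using \<delta> t by (auto simp: dist_real_def)
  then have gu: "y < \<bar>g u\<bar>" by linarith
  then have "u \<noteq> K" "u \<noteq> K + d" using g0 y by auto
  then have "i \<noteq> 0" "i \<noteq> 2^N" using d by (auto simp: u_def)
  moreover have "d * real i / 2^N \<le> d" using ut(1) t by (simp add: u_def)
  then have "i \<le> 2^N" using d by (simp add: field_simps)
  ultimately have "i - 1 < 2^N - 1" "real (i - 1) + 1 = real i" by auto
  then show ?thesis
    using gu g unfolding dyadic_exceedance_def u_def by (intro exI[of _ N] CollectI conjI exI[of _ "i - 1"]) auto
qed

lemma LIMSEQ_mult_Suc_over_Suc_Suc: "(\<lambda>n. x * real (Suc n) / real (Suc (Suc n))) \<longlonglongrightarrow> x"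
proof -
  have "(\<lambda>n. x * (real (Suc n) / real (Suc (Suc n)))) \<longlonglongrightarrow> x * 1"
    by (intro tendsto_mult tendsto_const LIMSEQ_Suc[OF LIMSEQ_n_over_Suc_n])
  then show ?thesis by simp
qed

lemma sup_tail_eq_dyadic_exceedance:
  assumes d: "d > 0" and x: "x > 0"
  defines "y n \<equiv> x * real (Suc n) / real (Suc (Suc n))"
  shows "{g \<in> C0 K d. x \<le> (SUP t\<in>{K..K+d}. \<bar>g t\<bar>)} = (\<Inter>n. \<Union>N. dyadic_exceedance K d N (y n))"
proof (intro equalityI subsetI)
  have y: "0 < y n" "y n < x" for n
    using x by (simp_all add: y_def field_simps add_pos_nonneg)
  have lim: "y \<longlonglongrightarrow> x" unfolding y_def by (rule LIMSEQ_mult_Suc_over_Suc_Suc)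
  fix g
  show "g \<in> (\<Inter>n. \<Union>N. dyadic_exceedance K d N (y n))" if "g \<in> {g \<in> C0 K d. x \<le> (SUP t\<in>{K..K+d}. \<bar>g t\<bar>)}"
    using that exists_dyadic_exceedance[OF _ d y(1)] y(2) by (fastforce intro: less_le_trans)
  assume g: "g \<in> (\<Inter>n. \<Union>N. dyadic_exceedance K d N (y n))"
  then have "g \<in> C0 K d" by (auto simp: dyadic_exceedance_def)
  moreover have "y n \<le> (SUP t\<in>{K..K+d}. \<bar>g t\<bar>)" for n
  proof -
    have "g \<in> (\<Union>N. dyadic_exceedance K d N (y n))" using g by blast
    then obtain N i where "g \<in> C0 K d" "i < 2^N - 1" "y n < \<bar>g (K + d * (real i + 1) / 2^N)\<bar>"
      by (auto simp: dyadic_exceedance_def)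
    then show ?thesis
      using dyadic_point_bounds[OF d, of i N K]
      by (intro less_imp_le less_le_trans[OF _ cSUP_upper[OF _ bdd_above_abs_C0]]) auto
  qed
  ultimately show "g \<in> {g \<in> C0 K d. x \<le> (SUP t\<in>{K..K+d}. \<bar>g t\<bar>)}"
    using LIMSEQ_le_const2[OF lim] by auto
qed

lemma sup_tail_in_sets:
  assumes "d > 0" "x > 0"
  shows "{g \<in> C0 K d. x \<le> (SUP t\<in>{K..K+d}. \<bar>g t\<bar>)} \<in> sets (bridge_space K d)"
  unfolding sup_tail_eq_dyadic_exceedance[OF assms] using dyadic_exceedance_in_sets[OF assms(1)] by blast

lemma measure_brownian_bridge_sup_tail:
  assumes BB: "is_brownian_bridge K d \<mu>" and d: "d > 0" and x: "x > 0"
  shows "measure \<mu> {g \<in> C0 K d. x \<le> (SUP t\<in>{K..K+d}. \<bar>g t\<bar>)} \<le> 2 * exp (- 2 * x\<^sup>2 / d)"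
proof -
  interpret prob_space \<mu> using BB by (simp add: is_brownian_bridge_def)
  have sets: "sets \<mu> = sets (bridge_space K d)" using BB by (simp add: is_brownian_bridge_def)
  define y where "y n = x * real (Suc n) / real (Suc (Suc n))" for n
  define E where "E n = (\<Union>N. dyadic_exceedance K d N (y n))" for n
  have y: "0 < y n" for n
    using x by (simp add: y_def add_pos_nonneg)
  have tail: "{g \<in> C0 K d. x \<le> (SUP t\<in>{K..K+d}. \<bar>g t\<bar>)} = (\<Inter>n. E n)"
    unfolding E_def y_def by (rule sup_tail_eq_dyadic_exceedance[OF d x])
  have E: "measure \<mu> (E n) \<le> 2 * exp (- 2 * (y n)\<^sup>2 / d)" for n
  proof -
    have "range (\<lambda>N. dyadic_exceedance K d N (y n)) \<subseteq> sets \<mu>"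
      using dyadic_exceedance_in_sets[OF d] sets by auto
    then have "emeasure \<mu> (E n) = (SUP N. emeasure \<mu> (dyadic_exceedance K d N (y n)))"
      unfolding E_def using SUP_emeasure_incseq incseq_dyadic_exceedance by metis
    also have "\<dots> \<le> ennreal (2 * exp (- 2 * (y n)\<^sup>2 / d))"
      using emeasure_dyadic_exceedance_le[OF BB d y] by (intro SUP_least) auto
    finally show ?thesis by (simp add: emeasure_eq_measure)
  qed
  have "y \<longlonglongrightarrow> x" unfolding y_def by (rule LIMSEQ_mult_Suc_over_Suc_Suc)
  then have lim: "(\<lambda>n. 2 * exp (- 2 * (y n)\<^sup>2 / d)) \<longlonglongrightarrow> 2 * exp (- 2 * x\<^sup>2 / d)"
    using d by (intro tendsto_intros) auto
  have le: "measure \<mu> (\<Inter>n. E n) \<le> 2 * exp (- 2 * (y n)\<^sup>2 / d)" for n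
  proof -
    have "E n \<in> sets \<mu>" using dyadic_exceedance_in_sets[OF d] sets by (auto simp: E_def)
    then have "measure \<mu> (\<Inter>n. E n) \<le> measure \<mu> (E n)" by (intro finite_measure_mono) auto
    then show ?thesis using E[of n] by linarith
  qed
  show ?thesis unfolding tail using LIMSEQ_le_const[OF lim] le by blast
qed

section \<open>Change of measure under an exponential moment of the density\<close>

lemma quintic_gap:
  fixes a p q :: real
  assumes a: "0 < a" and q: "0 \<le> q" "q \<le> p"
  shows "p^5 * (1 - a * p) \<le> q^5 * (1 - a * q) + 1 / a^5"
proof (cases "a * q \<le> 1")
  case True
  have "p^5 * (1 - a * p) \<le> 1 / a^5"
  proof (cases "a * p \<le> 1")
    case True
    have "p^5 * (1 - a * p) \<le> p^5" using a q by (simp add: right_diff_distrib)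
    also have "\<dots> \<le> (1 / a)^5" using True a q by (intro power_mono) (simp_all add: field_simps)
    finally show ?thesis by (simp add: power_one_over)
  next
    case False
    then have "p^5 * (1 - a * p) \<le> 0" using q by (intro mult_nonneg_nonpos) auto
    moreover have "0 \<le> 1 / a^5" using a by simp
    ultimately show ?thesis by linarith
  qed
  moreover have "0 \<le> q^5 * (1 - a * q)" using True q by simp
  ultimately show ?thesis by linarith
next
  case False
  have "a * q \<le> a * p" using a q by simp
  then have "p^5 * (1 - a * p) \<le> q^5 * (1 - a * p)"
    using False q by (intro mult_right_mono_neg power_mono) auto
  also have "\<dots> \<le> q^5 * (1 - a * q)" using q a by (intro mult_left_mono) (auto intro: mult_left_mono)
  finally show ?thesis using a by (simp add: add_increasing2)
qed

lemma powr_six_fifths_gap: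
  fixes a T u :: real
  assumes a: "0 < a" and T: "0 \<le> T" "T \<le> u"
  shows "u - a * u powr (6/5) \<le> T - a * T powr (6/5) + a powr (-5)"
proof -
  have "x - a * x powr (6/5) = (x powr (1/5))^5 * (1 - a * x powr (1/5))" if "0 \<le> x" for x :: real
  proof (cases "x = 0")
    case False
    then have "(x powr (1/5))^5 = x" using that by (simp add: powr_power)
    moreover have "x powr (6/5) = x * x powr (1/5)" using powr_add[of x 1 "1/5"] that by simp
    ultimately show ?thesis by (simp add: algebra_simps)
  qed simp
  moreover have "T powr (1/5) \<le> u powr (1/5)" using T by (intro powr_mono2) auto
  ultimately show ?thesis
    using quintic_gap[OF a _ \<open>T powr (1/5) \<le> u powr (1/5)\<close>] T a by (simp add: powr_neg_numeral)
qed

lemma le_exp_add_exp_moment: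
  fixes a T f :: real
  assumes a: "0 < a" and T: "0 \<le> T" and f: "0 \<le> f"
  shows "f \<le> exp T + exp (T - a * T powr (6/5) + a powr (-5)) * exp (a * (max 0 (ln f)) powr (6/5))"
proof (cases "f \<le> exp T")
  case True
  then show ?thesis by (simp add: add_increasing2)
next
  case False
  then have "0 < f" using exp_gt_zero[of T] by linarith
  with False have "T < ln f" by (metis exp_less_cancel_iff exp_ln not_le)
  then have "ln f \<le> T - a * T powr (6/5) + a powr (-5) + a * (max 0 (ln f)) powr (6/5)"
    using powr_six_fifths_gap[OF a T, of "ln f"] T by simp
  then have "exp (ln f) \<le> exp (T - a * T powr (6/5) + a powr (-5) + a * (max 0 (ln f)) powr (6/5))"
    by simp
  then show ?thesis using \<open>0 < f\<close> by (simp add: exp_add add_increasing)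
qed

lemma mult_powr_six_fifths_cancel:
  fixes \<alpha> L :: real
  assumes "0 < \<alpha>" "0 \<le> L"
  shows "\<alpha> * (\<alpha> powr (-5/6) * L powr (5/6)) powr (6/5) = L"
proof -
  have "(\<alpha> powr (-5/6) * L powr (5/6)) powr (6/5) = \<alpha> powr (-1) * L"
    using assms by (simp add: powr_mult powr_powr)
  then show ?thesis using assms by (simp add: powr_minus field_simps)
qed

lemma RN_moment_bound_arith:
  fixes \<alpha> a J m :: real
  assumes \<alpha>: "0 < \<alpha>" and a: "0 < a" "a \<le> max (4 * J) 1" and m: "m \<le> a"
  defines "T \<equiv> \<alpha> powr (-5/6) * (ln (max (4 * J) 1 / a)) powr (5/6)"
  shows "exp T * m + exp (T - \<alpha> * T powr (6/5) + \<alpha> powr (-5)) * max 0 J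
    \<le> a * 49 * exp (189 * \<alpha> powr (-5)) * exp T"
proof -
  define J4 where "J4 = max (4 * J) 1"
  have J4: "0 < J4" "max 0 J \<le> J4 / 4" by (auto simp: J4_def)
  have L: "0 \<le> ln (J4 / a)" using a by (simp add: J4_def)
  have C: "exp (T - \<alpha> * T powr (6/5) + \<alpha> powr (-5)) = exp T * (a / J4) * exp (\<alpha> powr (-5))"
    using mult_powr_six_fifths_cancel[OF \<alpha> L] a J4
    by (simp add: T_def J4_def exp_add exp_diff exp_minus field_simps)
  have "exp T * (a / J4) * exp (\<alpha> powr (-5)) * max 0 J \<le> exp T * a * exp (\<alpha> powr (-5)) / 4"
    using J4 a by (simp add: field_simps mult_left_mono)
  moreover have "exp T * m \<le> exp T * a" using m by simp
  ultimately have "exp T * m + exp (T - \<alpha> * T powr (6/5) + \<alpha> powr (-5)) * max 0 J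
      \<le> exp T * a + exp T * a * exp (\<alpha> powr (-5)) / 4"
    unfolding C by linarith
  also have "\<dots> = exp T * a * (1 + exp (\<alpha> powr (-5)) / 4)" by (simp add: algebra_simps)
  also have "\<dots> \<le> exp T * a * (49 * exp (189 * \<alpha> powr (-5)))"
  proof -
    have "exp (\<alpha> powr (-5)) \<le> exp (189 * \<alpha> powr (-5))" "1 \<le> exp (189 * \<alpha> powr (-5))"
      using \<alpha> by auto
    then have "1 + exp (\<alpha> powr (-5)) / 4 \<le> 49 * exp (189 * \<alpha> powr (-5))" by linarith
    then show ?thesis using a by (intro mult_left_mono) auto
  qed
  finally show ?thesis by (simp add: mult_ac)
qed

lemma emeasure_le_RN_deriv_moment:
  assumes \<mu>: "sigma_finite_measure \<mu>" and \<nu>: "sigma_finite_measure \<nu>"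
    and sets: "sets \<nu> = sets \<mu>" and ac: "absolutely_continuous \<mu> \<nu>"
    and \<alpha>: "0 < \<alpha>" and T: "0 \<le> T" and S: "S \<in> sets \<mu>"
  shows "emeasure \<nu> S \<le> ennreal (exp T) * emeasure \<mu> S
    + ennreal (exp (T - \<alpha> * T powr (6/5) + \<alpha> powr (-5)))
      * (\<integral>\<^sup>+g. ennreal (exp (\<alpha> * (max 0 (ln (enn2real (RN_deriv \<mu> \<nu> g)))) powr (6/5))) \<partial>\<mu>)"
proof -
  define R where "R = RN_deriv \<mu> \<nu>"
  define C where "C = ennreal (exp (T - \<alpha> * T powr (6/5) + \<alpha> powr (-5)))"
  define h where "h g = ennreal (exp (\<alpha> * (max 0 (ln (enn2real (R g)))) powr (6/5)))" for g
  have [measurable]: "R \<in> borel_measurable \<mu>" unfolding R_def by simp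
  have "emeasure \<nu> S = (\<integral>\<^sup>+g. R g * indicator S g \<partial>\<mu>)"
    using sigma_finite_measure.density_RN_deriv[OF \<mu> ac sets] S
    by (metis R_def emeasure_density \<open>R \<in> borel_measurable \<mu>\<close>)
  also have "\<dots> \<le> (\<integral>\<^sup>+g. ennreal (exp T) * indicator S g + C * h g \<partial>\<mu>)"
  proof (rule nn_integral_mono_AE)
    show "AE g in \<mu>. R g * indicator S g \<le> ennreal (exp T) * indicator S g + C * h g"
      using sigma_finite_measure.RN_deriv_finite[OF \<mu> \<nu> ac sets]
    proof eventually_elim
      case (elim g)
      then have "R g = ennreal (enn2real (R g))" by (simp add: R_def less_top)
      also have "\<dots> \<le> ennreal (exp T) + C * h g"
        using le_exp_add_exp_moment[OF \<alpha> T enn2real_nonneg[of "R g"]]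
        by (simp add: C_def h_def ennreal_mult'[symmetric] ennreal_plus[symmetric] del: ennreal_plus)
      finally show ?case by (auto simp: indicator_def)
    qed
  qed
  also have "\<dots> = ennreal (exp T) * emeasure \<mu> S + C * (\<integral>\<^sup>+g. h g \<partial>\<mu>)"
    using S by (simp add: h_def nn_integral_add nn_integral_cmult)
  finally show ?thesis by (simp add: C_def h_def R_def)
qed

lemma measure_le_RN_deriv_moment:
  assumes \<mu>: "finite_measure \<mu>" and \<nu>: "finite_measure \<nu>"
    and sets: "sets \<nu> = sets \<mu>" and ac: "absolutely_continuous \<mu> \<nu>"
    and J: "(\<integral>\<^sup>+g. ennreal (exp (\<alpha> * (max 0 (ln (enn2real (RN_deriv \<mu> \<nu> g)))) powr (6/5))) \<partial>\<mu>) = ennreal J"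
    and \<alpha>: "0 < \<alpha>" and S: "S \<in> sets \<mu>" and a: "measure \<mu> S \<le> a" "a \<le> max (4 * J) 1"
  shows "measure \<nu> S \<le> a * 49 * exp (189 * \<alpha> powr (-5))
    * exp (\<alpha> powr (-5/6) * (ln (max (4 * J) 1 / a)) powr (5/6))"
proof (cases "a = 0")
  case True
  then have "S \<in> null_sets \<mu>"
    using a S measure_nonneg[of \<mu> S] \<mu> by (simp add: null_sets_def finite_measure.emeasure_eq_measure)
  then have "S \<in> null_sets \<nu>" using ac by (auto simp: absolutely_continuous_def)
  then show ?thesis using True by (simp add: measure_def null_sets_def)
next
  case False
  then have a0: "0 < a" using a measure_nonneg[of \<mu> S] by linarith
  interpret \<mu>: finite_measure \<mu> by (fact \<mu>)
  interpret \<nu>: finite_measure \<nu> by (fact \<nu>)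
  define T where "T = \<alpha> powr (-5/6) * (ln (max (4 * J) 1 / a)) powr (5/6)"
  have "emeasure \<nu> S \<le> ennreal (exp T) * ennreal (measure \<mu> S)
      + ennreal (exp (T - \<alpha> * T powr (6/5) + \<alpha> powr (-5))) * ennreal (max 0 J)"
    using emeasure_le_RN_deriv_moment[OF \<mu>.sigma_finite_measure_axioms \<nu>.sigma_finite_measure_axioms sets ac \<alpha>, of T S]
    by (simp add: T_def J S \<mu>.emeasure_eq_measure ennreal_max_0)
  also have "\<dots> = ennreal (exp T * measure \<mu> S + exp (T - \<alpha> * T powr (6/5) + \<alpha> powr (-5)) * max 0 J)"
    by (simp add: ennreal_mult' ennreal_plus)
  finally have "measure \<nu> S \<le> exp T * measure \<mu> S + exp (T - \<alpha> * T powr (6/5) + \<alpha> powr (-5)) * max 0 J"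
    unfolding measure_def by (rule enn2real_leI[rotated]) simp
  also have "\<dots> \<le> a * 49 * exp (189 * \<alpha> powr (-5)) * exp T"
    unfolding T_def by (rule RN_moment_bound_arith[OF \<alpha> a0 a(2) a(1)])
  finally show ?thesis by (simp add: T_def)
qed

section \<open>The bridged curves of the Airy line ensemble\<close>

text \<open>The ensemble only guarantees continuity of the curves of index \<open>k \<ge> 1\<close>.\<close>
lemma bridge_curve_in_C0:
  assumes ale: "airy_line_ensemble M A" and d: "d > 0" and k: "k \<ge> 1" and \<omega>: "\<omega> \<in> space M"
  shows "restrict (bridge_L A K d \<omega> k) {K..K+d} \<in> C0 K d"
proof -
  have cont: "continuous_on UNIV (A \<omega> k)" using ale k \<omega> by (simp add: airy_line_ensemble_def)
  have "continuous_on {K..K+d} (bridge_L A K d \<omega> k)"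
    unfolding bridge_L_def airy_L_def using d by (intro continuous_intros continuous_on_subset[OF cont]) auto
  then have "continuous_on {K..K+d} (restrict (bridge_L A K d \<omega> k) {K..K+d})"
    by (rule continuous_on_cong[THEN iffD1, rotated 2]) auto
  moreover have "bridge_L A K d \<omega> k K = 0" "bridge_L A K d \<omega> k (K + d) = 0"
    using d by (simp_all add: bridge_L_def field_simps)
  ultimately show ?thesis using d by (simp add: C0_def)
qed

lemma measurable_bridge_curve:
  assumes ale: "airy_line_ensemble M A" and d: "d > 0" and k: "k \<ge> 1"
  shows "(\<lambda>\<omega>. restrict (bridge_L A K d \<omega> k) {K..K+d}) \<in> M \<rightarrow>\<^sub>M bridge_space K d"
proof -
  have [measurable]: "(\<lambda>\<omega>. A \<omega> j x) \<in> borel_measurable M" for j x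
    using ale by (simp add: airy_line_ensemble_def)
  have "(\<lambda>\<omega>. restrict (bridge_L A K d \<omega> k) {K..K+d}) \<in> M \<rightarrow>\<^sub>M PiM {K..K+d} (\<lambda>_. borel)"
    unfolding bridge_L_def airy_L_def by (rule measurable_PiM_single') (auto simp: extensional_def)
  then show ?thesis
    unfolding bridge_space_def using bridge_curve_in_C0[OF ale d k]
    by (intro measurable_restrict_space2) auto
qed

lemma measure_bridge_law:
  assumes ale: "airy_line_ensemble M A" and d: "d > 0" and k: "k \<ge> 1"
    and S: "S \<in> sets (bridge_space K d)"
  shows "measure (bridge_law M A K d k) S = measure M {\<omega> \<in> space M. restrict (bridge_L A K d \<omega> k) {K..K+d} \<in> S}"
  using measure_distr[OF measurable_bridge_curve[OF ale d k] S]
  by (simp add: bridge_law_def vimage_def Int_def conj_commute)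

lemma bridge_curve_measure_le:
  assumes ale: "airy_line_ensemble M A" and d: "d > 0" and k: "k \<ge> 1"
    and BB: "is_brownian_bridge K d \<mu>" and \<alpha>: "0 < \<alpha>"
    and ac: "absolutely_continuous \<mu> (bridge_law M A K d k)"
    and J: "(\<integral>\<^sup>+g. ennreal (exp (\<alpha> * (max 0 (ln (rn_density M A \<mu> K d k g))) powr (6/5))) \<partial>\<mu>) = ennreal J"
    and S: "S \<in> sets (bridge_space K d)" and a: "measure \<mu> S \<le> a" "a \<le> max (4 * J) 1"
  shows "measure M {\<omega> \<in> space M. restrict (bridge_L A K d \<omega> k) {K..K+d} \<in> S}
    \<le> a * 49 * exp (189 * \<alpha> powr (-5)) * exp (\<alpha> powr (-5/6) * (ln (max (4 * J) 1 / a)) powr (5/6))"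
proof -
  interpret M: prob_space M using ale by (simp add: airy_line_ensemble_def)
  interpret \<mu>: prob_space \<mu> using BB by (simp add: is_brownian_bridge_def)
  have sets: "sets (bridge_law M A K d k) = sets \<mu>"
    using BB by (simp add: bridge_law_def is_brownian_bridge_def)
  have "prob_space (bridge_law M A K d k)"
    unfolding bridge_law_def by (rule M.prob_space_distr[OF measurable_bridge_curve[OF ale d k]])
  then have "finite_measure (bridge_law M A K d k)" by (rule prob_space.finite_measure)
  moreover have "S \<in> sets \<mu>" using S BB by (simp add: is_brownian_bridge_def)
  moreover note J[unfolded rn_density_def]
  ultimately have "measure (bridge_law M A K d k) S
      \<le> a * 49 * exp (189 * \<alpha> powr (-5)) * exp (\<alpha> powr (-5/6) * (ln (max (4 * J) 1 / a)) powr (5/6))"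
    using measure_le_RN_deriv_moment[OF \<mu>.finite_measure_axioms _ sets ac _ \<alpha> _ a] by blast
  then show ?thesis by (simp add: measure_bridge_law[OF ale d k S])
qed

lemma sup_tail_arith:
  fixes s \<alpha> J :: real
  assumes s: "sqrt (ln 2 / 2) < s" "sqrt (ln (max (4 * J) 1) / 2) < s" and \<alpha>: "0 < \<alpha>"
  defines "a \<equiv> 2 * exp (- 2 * s\<^sup>2)"
  shows "a \<le> max (4 * J) 1"
    and "a * 49 * exp (\<alpha> powr (-5/6) * (ln (max (4 * J) 1 / a)) powr (5/6))
      \<le> 98 * exp (- 2 * s\<^sup>2 * (1 - 2 powr (2/3) * \<alpha> powr (-5/6) * s powr (-1/3)))"
proof -
  define J4 where "J4 = max (4 * J) (1::real)"
  have "0 \<le> sqrt (ln 2 / 2)" by simp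
  then have s0: "0 < s" using s(1) by linarith
  have sq: "x < s\<^sup>2" if "sqrt x < s" for x
    using that s0 real_sqrt_less_iff[of x "s\<^sup>2"] by simp
  have ln2: "ln 2 < 2 * s\<^sup>2" and lnJ4: "ln J4 < 2 * s\<^sup>2"
    using sq[OF s(1)] sq[OF s(2)] by (simp_all add: J4_def)
  have "ln a < 0" using ln2 by (simp add: a_def ln_mult)
  then have a1: "a < 1" by (simp add: a_def)
  then show "a \<le> max (4 * J) 1" by simp
  define L where "L = ln (J4 / a)"
  have "0 < J4" by (simp add: J4_def)
  then have "L = ln J4 - ln 2 + 2 * s\<^sup>2" by (simp add: L_def a_def ln_div ln_mult)
  moreover have "0 \<le> ln J4" "0 < ln (2::real)" by (simp_all add: J4_def)
  ultimately have L: "0 \<le> L" "L \<le> 4 * s\<^sup>2" using lnJ4 ln2 by linarith+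
  have "L powr (5/6) \<le> (4 * s\<^sup>2) powr (5/6)" using L by (intro powr_mono2) auto
  also have "\<dots> = 2 * 2 powr (2/3) * s powr (5/3)"
  proof -
    have "(4::real) powr (5/6) = 2 * 2 powr (2/3)"
      using powr_powr[of 2 2 "5/6"] powr_add[of "2::real" 1 "2/3"] by simp
    moreover have "(s\<^sup>2) powr (5/6) = s powr (5/3)"
      using powr_powr[of s 2 "5/6"] s0 by (simp add: powr_realpow)
    ultimately show ?thesis by (simp add: powr_mult)
  qed
  also have "\<dots> = 2 * s\<^sup>2 * (2 powr (2/3) * s powr (-1/3))"
    using powr_add[of s 2 "-1/3"] s0 by (simp add: powr_realpow)
  finally have "\<alpha> powr (-5/6) * L powr (5/6) \<le> \<alpha> powr (-5/6) * (2 * s\<^sup>2 * (2 powr (2/3) * s powr (-1/3)))"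
    by (simp add: mult_left_mono)
  then have "- 2 * s\<^sup>2 + \<alpha> powr (-5/6) * L powr (5/6)
      \<le> - 2 * s\<^sup>2 * (1 - 2 powr (2/3) * \<alpha> powr (-5/6) * s powr (-1/3))"
    by (simp add: algebra_simps)
  then have "exp (- 2 * s\<^sup>2 + \<alpha> powr (-5/6) * L powr (5/6))
      \<le> exp (- 2 * s\<^sup>2 * (1 - 2 powr (2/3) * \<alpha> powr (-5/6) * s powr (-1/3)))"
    by simp
  have "a * 49 * exp (\<alpha> powr (-5/6) * L powr (5/6))
      = 98 * exp (- 2 * s\<^sup>2 + \<alpha> powr (-5/6) * L powr (5/6))"
    unfolding a_def exp_add by (simp add: mult_ac)
  also have "\<dots> \<le> 98 * exp (- 2 * s\<^sup>2 * (1 - 2 powr (2/3) * \<alpha> powr (-5/6) * s powr (-1/3)))"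
    using \<open>exp _ \<le> exp _\<close> by simp
  finally have "a * 49 * exp (\<alpha> powr (-5/6) * L powr (5/6))
      \<le> 98 * exp (- 2 * s\<^sup>2 * (1 - 2 powr (2/3) * \<alpha> powr (-5/6) * s powr (-1/3)))" .
  then show "a * 49 * exp (\<alpha> powr (-5/6) * (ln (max (4 * J) 1 / a)) powr (5/6))
      \<le> 98 * exp (- 2 * s\<^sup>2 * (1 - 2 powr (2/3) * \<alpha> powr (-5/6) * s powr (-1/3)))"
    by (simp add: L_def J4_def)
qed

lemma bridge_curve_sup_tail:
  assumes ale: "airy_line_ensemble M A" and d: "d > 0" and k: "k \<ge> 1"
    and BB: "is_brownian_bridge K d \<mu>" and \<alpha>: "0 < \<alpha>"
    and ac: "absolutely_continuous \<mu> (bridge_law M A K d k)"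
    and J: "(\<integral>\<^sup>+g. ennreal (exp (\<alpha> * (max 0 (ln (rn_density M A \<mu> K d k g))) powr (6/5))) \<partial>\<mu>) = ennreal J"
    and s: "sqrt (ln 2 / 2) < s" "sqrt (ln (max (4 * J) 1) / 2) < s"
  shows "measure M {\<omega> \<in> space M. s * sqrt d \<le> (SUP x\<in>{K..K+d}. \<bar>bridge_L A K d \<omega> k x\<bar>)}
    \<le> 98 * exp (189 * \<alpha> powr (-5)) * exp (- 2 * s\<^sup>2 * (1 - 2 powr (2/3) * \<alpha> powr (-5/6) * s powr (-1/3)))"
proof -
  define tail where "tail = {g \<in> C0 K d. s * sqrt d \<le> (SUP t\<in>{K..K+d}. \<bar>g t\<bar>)}"
  have "0 \<le> sqrt (ln 2 / 2)" by simp
  then have "0 < s" using s(1) by linarith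
  then have x: "0 < s * sqrt d" using d by simp
  have "measure \<mu> tail \<le> 2 * exp (- 2 * (s * sqrt d)\<^sup>2 / d)"
    unfolding tail_def by (rule measure_brownian_bridge_sup_tail[OF BB d x])
  then have tail_le: "measure \<mu> tail \<le> 2 * exp (- 2 * s\<^sup>2)"
    using d by (simp add: power_mult_distrib)
  have "{\<omega> \<in> space M. s * sqrt d \<le> (SUP x\<in>{K..K+d}. \<bar>bridge_L A K d \<omega> k x\<bar>)}
      = {\<omega> \<in> space M. restrict (bridge_L A K d \<omega> k) {K..K+d} \<in> tail}"
  proof -
    have "(SUP t\<in>{K..K+d}. \<bar>restrict f {K..K+d} t\<bar>) = (SUP t\<in>{K..K+d}. \<bar>f t\<bar>)" for f :: "real \<Rightarrow> real"
      by (rule SUP_cong) auto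
    then show ?thesis using bridge_curve_in_C0[OF ale d k] by (auto simp: tail_def simp del: restrict_apply)
  qed
  also have "measure M \<dots> \<le> 2 * exp (- 2 * s\<^sup>2) * 49 * exp (189 * \<alpha> powr (-5))
      * exp (\<alpha> powr (-5/6) * (ln (max (4 * J) 1 / (2 * exp (- 2 * s\<^sup>2)))) powr (5/6))"
    using sup_tail_in_sets[OF d x] sup_tail_arith(1)[OF s \<alpha>] tail_le
    by (intro bridge_curve_measure_le[OF ale d k BB \<alpha> ac J]) (simp_all add: tail_def)
  also have "\<dots> \<le> 98 * exp (189 * \<alpha> powr (-5)) * exp (- 2 * s\<^sup>2 * (1 - 2 powr (2/3) * \<alpha> powr (-5/6) * s powr (-1/3)))"
    using mult_left_mono[OF sup_tail_arith(2)[OF s \<alpha>], of "exp (189 * \<alpha> powr (-5))"] by (simp add: mult_ac)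
  finally show ?thesis .
qed

text \<open>Neither \<open>alpha k' \<le> 1\<close> nor \<open>alpha_inf\<close> is needed for a single index \<open>k\<close>.\<close>
theorem corollary2p2:
  fixes M :: "'w measure" and A :: "'w \<Rightarrow> nat \<Rightarrow> real \<Rightarrow> real"
    and d :: real and alpha j :: "nat \<Rightarrow> real"
    and BB :: "real \<Rightarrow> (real \<Rightarrow> real) measure"
    and K :: real and k :: nat
  assumes ale: "airy_line_ensemble M A"
    and d: "d \<ge> 1"
    and BB: "\<forall>K'. is_brownian_bridge K' d (BB K')"
    and alpha_range: "\<forall>k'\<ge>1. 0 < alpha k' \<and> alpha k' \<le> 1"
    and alpha_inf: "\<exists>c>0. \<forall>k'\<ge>1. c \<le> alpha k' powr (1 / real k')"
    and abs_cont: "\<forall>K'. \<forall>k'\<ge>1. absolutely_continuous (BB K') (bridge_law M A K' d k')"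
    and j_def: "\<forall>K'. \<forall>k'\<ge>1.
       (\<integral>\<^sup>+ g. ennreal (exp (alpha k' * (max 0 (ln (rn_density M A (BB K') K' d k' g))) powr (6/5)))
          \<partial>BB K') = ennreal (j k')"
    and k: "k \<ge> 1"
  shows "(\<forall>S \<in> sets (bridge_space K d).
            let a = measure (BB K) S in
            measure M {\<omega> \<in> space M. restrict (bridge_L A K d \<omega> k) {K..K+d} \<in> S}
              \<le> a * 49 * exp (189 * alpha k powr (-5))
                  * exp (alpha k powr (-5/6) * (ln (max (4 * j k) 1 / a)) powr (5/6)))
       \<and> (\<forall>s::real. s > sqrt (ln 2 / 2) \<and> s > sqrt (ln (max (4 * j k) 1) / 2) \<longrightarrow>
            measure M {\<omega> \<in> space M. (SUP x\<in>{K..K+d}. \<bar>bridge_L A K d \<omega> k x\<bar>) \<ge> s * sqrt d}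
              \<le> 98 * exp (189 * alpha k powr (-5))
                  * exp (- 2 * s ^ 2 * (1 - 2 powr (2/3) * alpha k powr (-5/6) * s powr (-1/3))))"
proof -
  have d0: "d > 0" and BBK: "is_brownian_bridge K d (BB K)" and \<alpha>: "0 < alpha k"
    using d BB alpha_range k by auto
  have ac: "absolutely_continuous (BB K) (bridge_law M A K d k)" using abs_cont k by simp
  have J: "(\<integral>\<^sup>+g. ennreal (exp (alpha k * (max 0 (ln (rn_density M A (BB K) K d k g))) powr (6/5))) \<partial>BB K)
      = ennreal (j k)"
    using j_def k by simp
  interpret prob_space "BB K" using BBK by (simp add: is_brownian_bridge_def)
  have "measure (BB K) S \<le> max (4 * j k) 1" for S by (simp add: le_max_iff_disj)
  then show ?thesis
    using bridge_curve_measure_le[OF ale d0 k BBK \<alpha> ac J _ order_refl]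
      bridge_curve_sup_tail[OF ale d0 k BBK \<alpha> ac J]
    by (simp add: Let_def)
qed

end
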